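(* At any point during the execution of $\mathit{find\_ap\_set}$, let $t$ be an odd vertex whose even mate $t'$ is completely scanned, and let $s$ be an odd descendant of $t$ in the search structure. Then after any later blossom step that makes $s$ even, $s$ and $t$ belong to the same blossom.
   Context: Let $H$ be a finite undirected graph with a matching $M_H$ (free vertices, $\mathit{mate}$, alternating and augmenting paths as usual). The procedure $\mathit{find\_ap\_set}$ maintains a search structure $S$ (a forest of alternating trees whose nodes are odd vertices and blossoms = sets of even vertices with a base; $b(x)$ denotes the base of the blossom containing an even vertex $x$) and a set $\mathit{CP}$ of vertex-disjoint augmenting paths, both initially empty. For each free vertex $f$ in turn: if $f$ is not on a path of $\mathit{CP}$, add $f$ to $S$ as the root of a new tree (a trivial even blossom) and call $\mathit{find\_ap}(f)$. The recursive call $\mathit{find\_ap}(x)$, for $x$ even, scans each non-matching edge $xy$ in turn: if $y\notin S$ and $y$ is free, add $xy$ to $S$, add the path formed by the canonical path of $x$ followed by $y$ to $\mathit{CP}$, and terminate every currently executing call of $\mathit{find\_ap}$ (the outer loop then continues with the next free vertex); if $y\notin S$ and $y$ is matched (grow step), add $y$ as odd child of $b(x)$ and $y'=\mathit{mate}(y)$ as even child of $y$, and call $\mathit{find\_ap}(y')$; if $y\in S$ and $b(y)$ is even and a proper descendant of $b(x)$ in $S$ (blossom step), let $u_1,\dots,u_k$ be the odd vertices on the tree path from $b(x)$ to $b(y)$ with $u_1$ closest to $b(x)$, merge all blossoms and odd vertices on this path into one blossom with base $b(x)$ (so $u_1,\dots,u_k$ become even), and call $\mathit{find\_ap}(u_1),\dots,\mathit{find\_ap}(u_k)$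 in this order; otherwise do nothing. Vertices in $S$ remain in $S$ between trees. An even vertex $x$ is completely scanned if $\mathit{find\_ap}(x)$ has been called and was not terminated prematurely (so all non-matching edges at $x$ have been scanned). *)

theory Defs
  imports Main
begin

definition graph :: "'v set \<Rightarrow> 'v set set \<Rightarrow> bool" where
  "graph V E \<longleftrightarrow> finite V \<and> (\<forall>e\<in>E. \<exists>u v. e = {u, v} \<and> u \<noteq> v \<and> u \<in> V \<and> v \<in> V)"

definition matching :: "'v set set \<Rightarrow> bool" where
  "matching M \<longleftrightarrow> (\<forall>e1\<in>M. \<forall>e2\<in>M. e1 \<noteq> e2 \<longrightarrow> e1 \<inter> e2 = {})"

definition matched :: "'v set set \<Rightarrow> 'v \<Rightarrow> bool" where
  "matched M v \<longleftrightarrow> (\<exists>u. {u, v} \<in> M)"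

definition mate :: "'v set set \<Rightarrow> 'v \<Rightarrow> 'v" where
  "mate M v = (THE u. {u, v} \<in> M)"

definition nm_nbrs :: "'v set set \<Rightarrow> 'v set set \<Rightarrow> 'v \<Rightarrow> 'v set" where
  "nm_nbrs E M x = {y. {x, y} \<in> E \<and> {x, y} \<notin> M}"

datatype lbl = Odd | Even

text \<open>A frame of the recursion stack: either a running call find_ap(x) with the set of
  non-matching neighbours still to be scanned, or the list of calls find_ap(u_i),...,find_ap(u_k)
  still to be made after a blossom step (after which the frame below continues).\<close>
datatype 'v frame = Scan 'v "'v set" | Calls "'v list"

record 'v st =
  lab :: "'v \<Rightarrow> lbl option"   \<comment> \<open>None: not in S; Some Odd / Some Even\<close>
  par :: "'v \<Rightarrow> 'v"            \<comment> \<open>for an odd vertex y: the even vertex x with xy in S\<close>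
  bse :: "'v \<Rightarrow> 'v"            \<comment> \<open>for an even vertex x: the base b(x) of its blossom\<close>
  cp  :: "('v \<times> 'v) set"       \<comment> \<open>CP, each path recorded by its two (free) end vertices\<close>
  stk :: "'v frame list"
  rest :: "'v list"             \<comment> \<open>free vertices not yet handled by the outer loop\<close>
  scanned :: "'v set"           \<comment> \<open>completely scanned even vertices\<close>
  cur_root :: "'v"              \<comment> \<open>root of the tree currently being searched\<close>

definition init_st :: "'v list \<Rightarrow> 'v st" where
  "init_st fs = \<lparr>lab = (\<lambda>_. None), par = (\<lambda>v. v), bse = (\<lambda>v. v), cp = {}, stk = [],
                 rest = fs, scanned = {}, cur_root = undefined\<rparr>"

text \<open>Nodes of S are odd vertices and blossoms (a blossom is represented by its base).\<close>
definition node_parent :: "'v set set \<Rightarrow> 'v st \<Rightarrow> 'v \<Rightarrow> 'v option" where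
  "node_parent M s v =
     (case lab s v of
        Some Odd \<Rightarrow> Some (bse s (par s v))
      | Some Even \<Rightarrow> (if bse s v = v \<and> matched M v then Some (mate M v) else None)
      | None \<Rightarrow> None)"

definition tree_rel :: "'v set set \<Rightarrow> 'v st \<Rightarrow> ('v \<times> 'v) set" where
  "tree_rel M s = {(c, p). node_parent M s c = Some p}"

definition proper_desc :: "'v set set \<Rightarrow> 'v st \<Rightarrow> 'v \<Rightarrow> 'v \<Rightarrow> bool" where
  "proper_desc M s d a \<longleftrightarrow> (d, a) \<in> (tree_rel M s)\<^sup>+"

definition next_tree_step :: "'v set set \<Rightarrow> 'v set set \<Rightarrow> 'v st \<Rightarrow> 'v st \<Rightarrow> bool" where
  "next_tree_step E M s s' \<longleftrightarrow>
     stk s = [] \<and>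
     (\<exists>f fs. rest s = f # fs \<and>
        (if (\<exists>p\<in>cp s. f = fst p \<or> f = snd p)
         then s' = s\<lparr>rest := fs\<rparr>
         else s' = s\<lparr>lab := (lab s)(f := Some Even), bse := (bse s)(f := f),
                      stk := [Scan f (nm_nbrs E M f)], rest := fs,
                      cur_root := f\<rparr>))"

definition finish_step :: "'v st \<Rightarrow> 'v st \<Rightarrow> bool" where
  "finish_step s s' \<longleftrightarrow>
     (\<exists>x rs. stk s = Scan x {} # rs \<and> s' = s\<lparr>stk := rs, scanned := insert x (scanned s)\<rparr>)"

definition calls_step :: "'v set set \<Rightarrow> 'v set set \<Rightarrow> 'v st \<Rightarrow> 'v st \<Rightarrow> bool" where
  "calls_step E M s s' \<longleftrightarrow>
     (\<exists>rs. stk s = Calls [] # rs \<and> s' = s\<lparr>stk := rs\<rparr>) \<or>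
     (\<exists>u us rs. stk s = Calls (u # us) # rs \<and>
                s' = s\<lparr>stk := Scan u (nm_nbrs E M u) # Calls us # rs\<rparr>)"

text \<open>Scanning a non-matching edge xy (in an arbitrary order): augmenting, grow, or nothing.\<close>
definition scan_step :: "'v set set \<Rightarrow> 'v set set \<Rightarrow> 'v st \<Rightarrow> 'v st \<Rightarrow> bool" where
  "scan_step E M s s' \<longleftrightarrow>
     (\<exists>x R rs y. stk s = Scan x R # rs \<and> y \<in> R \<and>
        (if lab s y = None \<and> \<not> matched M y then
           \<comment> \<open>augmenting path found: add xy to S, the path to CP, terminate all calls\<close>
           s' = s\<lparr>lab := (lab s)(y := Some Odd), par := (par s)(y := x),
                  cp := insert (cur_root s, y) (cp s), stk := []\<rparr>
         else if lab s y = None \<and> matched M y then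
           \<comment> \<open>grow step\<close>
           s' = s\<lparr>lab := (lab s)(y := Some Odd, mate M y := Some Even),
                  par := (par s)(y := x), bse := (bse s)(mate M y := mate M y),
                  stk := Scan (mate M y) (nm_nbrs E M (mate M y)) # Scan x (R - {y}) # rs\<rparr>
         else if lab s y = Some Even \<and> proper_desc M s (bse s y) (bse s x) then False
         else s' = s\<lparr>stk := Scan x (R - {y}) # rs\<rparr>))"

text \<open>P is the set of nodes on the tree path from b(y) to b(x); us = [u_1,...,u_k] lists the odd
  vertices on it with u_1 closest to b(x).\<close>
definition blossom_step :: "'v set set \<Rightarrow> 'v set set \<Rightarrow> 'v st \<Rightarrow> 'v st \<Rightarrow> bool" where
  "blossom_step E M s s' \<longleftrightarrow>
     (\<exists>x R rs y us.
        stk s = Scan x R # rs \<and> y \<in> R \<and>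
        lab s y = Some Even \<and> proper_desc M s (bse s y) (bse s x) \<and>
        (let P = {n. (bse s y, n) \<in> (tree_rel M s)\<^sup>* \<and> (n, bse s x) \<in> (tree_rel M s)\<^sup>*};
             inB = (\<lambda>v. (v \<in> P \<and> lab s v = Some Odd) \<or> (lab s v = Some Even \<and> bse s v \<in> P))
         in distinct us \<and> set us = {v \<in> P. lab s v = Some Odd} \<and>
            sorted_wrt (\<lambda>a b. proper_desc M s b a) us \<and>
            s' = s\<lparr>lab := (\<lambda>v. if inB v then Some Even else lab s v),
                   bse := (\<lambda>v. if inB v then bse s x else bse s v),
                   stk := Calls us # Scan x (R - {y}) # rs\<rparr>))"

definition step :: "'v set set \<Rightarrow> 'v set set \<Rightarrow> 'v st \<Rightarrow> 'v st \<Rightarrow> bool" where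
  "step E M s s' \<longleftrightarrow> next_tree_step E M s s' \<or> finish_step s s' \<or> calls_step E M s s' \<or>
                     scan_step E M s s' \<or> blossom_step E M s s'"

text \<open>run 0, ..., run n is an execution (prefix) of find_ap_set, where fs lists the free
  vertices in the order handled by the outer loop.\<close>
definition execution ::
  "'v set set \<Rightarrow> 'v set set \<Rightarrow> 'v list \<Rightarrow> (nat \<Rightarrow> 'v st) \<Rightarrow> nat \<Rightarrow> bool" where
  "execution E M fs run n \<longleftrightarrow> run 0 = init_st fs \<and> (\<forall>k<n. step E M (run k) (run (Suc k)))"

end

theory Submission
  imports Defs
begin

(*
  Call a vertex active while a call of find_ap on it is running or pending, i.e. while it lies
  in a frame of the recursion stack. The search maintains that no active vertex lies in the
  subtree of a completely scanned base, and that the vertices of the calls below a running call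
  on a base avoid the subtree of that base.

  When t' = mate(t) is completely scanned, every node on the tree path from s up to t lies in
  the subtree of t', so none of them contains an active vertex. Steps other than blossom steps
  keep old nodes and their parents and activate only new vertices, so this persists. A blossom
  step that leaves s odd also preserves it: if the contracted path met the path from s to t, its
  top b(x), the node of the active vertex x, would lie on that path. Finally, at the blossom step
  that makes s even, the contracted path runs from b(y) through s up to b(x); since b(x) holds the
  active vertex x it cannot lie strictly between s and t, so the node of t lies on the
  contracted path and t joins the blossom of s.
*)

locale graph_matching =
  fixes V :: "'v set" and E M :: "'v set set"
  assumes graph: "graph V E" and matching_subset: "M \<subseteq> E" and matching: "matching M"
begin

lemma matching_edge_neq: "{u, v} \<in> M \<Longrightarrow> u \<noteq> v"
proof -
  assume "{u, v} \<in> M"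
  then obtain a b where "{u, v} = {a, b}" "a \<noteq> b"
    using matching_subset graph unfolding graph_def by blast
  then show ?thesis by (auto simp: doubleton_eq_iff)
qed

lemma matching_edge_unique: "{u, v} \<in> M \<Longrightarrow> {u', v} \<in> M \<Longrightarrow> u = u'"
proof -
  assume uv: "{u, v} \<in> M" and u'v: "{u', v} \<in> M"
  have "{u, v} \<inter> {u', v} \<noteq> {}" by auto
  then have "{u, v} = {u', v}" using matching uv u'v unfolding matching_def by meson
  with matching_edge_neq[OF uv] show ?thesis by (auto simp: doubleton_eq_iff)
qed

lemma mate_edge: "matched M v \<Longrightarrow> {mate M v, v} \<in> M"
proof -
  assume "matched M v"
  then obtain u where u: "{u, v} \<in> M" unfolding matched_def by blast
  have "mate M v = u" unfolding mate_def
    by (rule the_equality) (use u matching_edge_unique in auto)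
  then show ?thesis using u by simp
qed

lemma mate_eqI: "{u, v} \<in> M \<Longrightarrow> mate M v = u"
  using mate_edge matching_edge_unique matched_def by metis

lemma mate_neq: "matched M v \<Longrightarrow> mate M v \<noteq> v"
  using mate_edge matching_edge_neq by metis

lemma matched_mate: "matched M v \<Longrightarrow> matched M (mate M v)"
  using mate_edge unfolding matched_def by (metis insert_commute)

lemma mate_mate: "matched M v \<Longrightarrow> mate M (mate M v) = v"
  using mate_edge mate_eqI by (metis insert_commute)

end

locale find_ap_set = graph_matching V E M for V :: "'v set" and E M +
  fixes fs :: "'v list"
  assumes distinct_free: "distinct fs" and set_free: "set fs = {v \<in> V. \<not> matched M v}"

section \<open>Search states\<close>

definition is_base :: "'v st \<Rightarrow> 'v \<Rightarrow> bool" where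
  "is_base s v \<longleftrightarrow> lab s v = Some Even \<and> bse s v = v"

definition node_of :: "'v st \<Rightarrow> 'v \<Rightarrow> 'v" where
  "node_of s w = (if lab s w = Some Odd then w else bse s w)"

definition subtree :: "'v set set \<Rightarrow> 'v st \<Rightarrow> 'v \<Rightarrow> 'v set" where
  "subtree M s v = {w. lab s w \<noteq> None \<and> (node_of s w, v) \<in> (tree_rel M s)\<^sup>*}"

fun frame_vertices :: "'v frame \<Rightarrow> 'v set" where
  "frame_vertices (Scan x R) = {x}"
| "frame_vertices (Calls us) = set us"

definition stack_vertices :: "'v frame list \<Rightarrow> 'v set" where
  "stack_vertices l = \<Union>(frame_vertices ` set l)"

definition pending_calls :: "'v frame list \<Rightarrow> 'v set" where
  "pending_calls l = \<Union>{set us | us. Calls us \<in> set l}"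

lemma stack_vertices_simps [simp]:
  "stack_vertices [] = {}" "stack_vertices (fr # l) = frame_vertices fr \<union> stack_vertices l"
  by (auto simp: stack_vertices_def)

lemma pending_calls_simps [simp]:
  "pending_calls [] = {}" "pending_calls (Scan x R # l) = pending_calls l"
  "pending_calls (Calls us # l) = set us \<union> pending_calls l"
  by (auto simp: pending_calls_def)

lemma pending_calls_subset_stack_vertices: "pending_calls l \<subseteq> stack_vertices l"
proof (induction l)
  case (Cons fr l)
  then show ?case by (cases fr) auto
qed simp

fun older_frames_avoid :: "('v \<Rightarrow> bool) \<Rightarrow> ('v \<Rightarrow> 'v set) \<Rightarrow> 'v frame list \<Rightarrow> bool" where
  "older_frames_avoid P A [] = True"
| "older_frames_avoid P A (Scan v R # l) =
     ((P v \<longrightarrow> stack_vertices l \<inter> A v = {}) \<and> older_frames_avoid P A l)"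
| "older_frames_avoid P A (Calls us # l) = older_frames_avoid P A l"

lemma older_frames_avoid_mono:
  assumes "older_frames_avoid P A l"
    and "\<And>v w. v \<in> stack_vertices l \<Longrightarrow> P' v \<Longrightarrow> w \<in> stack_vertices l \<Longrightarrow> w \<in> A' v \<Longrightarrow>
      P v \<and> w \<in> A v"
  shows "older_frames_avoid P' A' l"
  using assms
proof (induction l)
  case (Cons fr l)
  then have "older_frames_avoid P' A' l" by (cases fr) auto
  with Cons.prems show ?case by (cases fr) fastforce+
qed simp

lemma single_valued_tree_rel: "single_valued (tree_rel M s)"
  by (auto simp: single_valued_def tree_rel_def)

text \<open>Every step other than a blossom step is a conservative extension.\<close>
definition conservative_extension :: "'v set set \<Rightarrow> 'v st \<Rightarrow> 'v st \<Rightarrow> bool" where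
  "conservative_extension M s s' \<longleftrightarrow>
     (\<forall>v. lab s v \<noteq> None \<longrightarrow>
        lab s' v = lab s v \<and> node_of s' v = node_of s v \<and> node_parent M s' v = node_parent M s v) \<and>
     (\<forall>v. lab s v = None \<longrightarrow> lab s' v \<noteq> None \<longrightarrow> lab s (node_of s' v) = None) \<and>
     stack_vertices (stk s') \<subseteq> stack_vertices (stk s) \<union> {v. lab s v = None}"

lemma conservative_extensionD:
  assumes "conservative_extension M s s'"
  shows "lab s v \<noteq> None \<Longrightarrow> lab s' v = lab s v"
    and "lab s v \<noteq> None \<Longrightarrow> node_of s' v = node_of s v"
    and "lab s v \<noteq> None \<Longrightarrow> node_parent M s' v = node_parent M s v"
    and "lab s v = None \<Longrightarrow> lab s' v \<noteq> None \<Longrightarrow> lab s (node_of s' v) = None"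
    and "stack_vertices (stk s') \<subseteq> stack_vertices (stk s) \<union> {v. lab s v = None}"
  using assms unfolding conservative_extension_def by blast+

lemma conservative_extensionI:
  assumes "\<And>v. lab s v \<noteq> None \<Longrightarrow> lab s' v = lab s v"
    and "\<And>v. lab s v \<noteq> None \<Longrightarrow> node_of s' v = node_of s v"
    and "\<And>v. lab s v \<noteq> None \<Longrightarrow> node_parent M s' v = node_parent M s v"
    and "\<And>v. lab s v = None \<Longrightarrow> lab s' v \<noteq> None \<Longrightarrow> lab s (node_of s' v) = None"
    and "stack_vertices (stk s') \<subseteq> stack_vertices (stk s) \<union> {v. lab s v = None}"
  shows "conservative_extension M s s'"
  using assms unfolding conservative_extension_def by blast

lemma conservative_extension_same_tree:
  assumes "lab s' = lab s" "par s' = par s" "bse s' = bse s"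
    and "stack_vertices (stk s') \<subseteq> stack_vertices (stk s)"
  shows "conservative_extension M s s'"
  unfolding conservative_extension_def node_of_def node_parent_def assms(1,2,3)
  using assms(4) by auto

definition inactive_path :: "'v set set \<Rightarrow> 'v st \<Rightarrow> 'v \<Rightarrow> 'v \<Rightarrow> bool" where
  "inactive_path M s a t \<longleftrightarrow> (a, node_of s t) \<in> (tree_rel M s)\<^sup>+ \<and>
     (\<forall>w \<in> stack_vertices (stk s). (a, node_of s w) \<in> (tree_rel M s)\<^sup>* \<longrightarrow>
        (node_of s w, node_of s t) \<notin> (tree_rel M s)\<^sup>+)"

lemma inactive_pathI:
  assumes "(a, node_of s t) \<in> (tree_rel M s)\<^sup>+"
    and "\<And>w. w \<in> stack_vertices (stk s) \<Longrightarrow> (a, node_of s w) \<in> (tree_rel M s)\<^sup>* \<Longrightarrow>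
      (node_of s w, node_of s t) \<in> (tree_rel M s)\<^sup>+ \<Longrightarrow> False"
  shows "inactive_path M s a t"
  using assms unfolding inactive_path_def by blast

lemma inactive_pathD:
  assumes "inactive_path M s a t"
  shows "(a, node_of s t) \<in> (tree_rel M s)\<^sup>+"
    and "w \<in> stack_vertices (stk s) \<Longrightarrow> (a, node_of s w) \<in> (tree_rel M s)\<^sup>* \<Longrightarrow>
      (node_of s w, node_of s t) \<notin> (tree_rel M s)\<^sup>+"
  using assms unfolding inactive_path_def by blast+

locale search_state = find_ap_set V E M fs for V :: "'v set" and E M fs +
  fixes s :: "'v st"
  assumes base_even: "lab s v = Some Even \<Longrightarrow> is_base s (bse s v)"
    and par_even: "lab s v = Some Odd \<Longrightarrow> lab s (par s v) = Some Even"
    and odd_mate_base: "lab s v = Some Odd \<Longrightarrow> matched M v \<Longrightarrow> is_base s (mate M v)"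
    and base_mate_odd: "is_base s v \<Longrightarrow> matched M v \<Longrightarrow> lab s (mate M v) = Some Odd"
    and mate_labelled: "lab s v \<noteq> None \<Longrightarrow> matched M v \<Longrightarrow> lab s (mate M v) \<noteq> None"
    and stack_even: "v \<in> stack_vertices (stk s) \<Longrightarrow> lab s v = Some Even"
    and pending_not_base: "v \<in> pending_calls (stk s) \<Longrightarrow> bse s v \<noteq> v"
    and scanned_even: "v \<in> scanned s \<Longrightarrow> lab s v = Some Even"
    and tree_rel_ranked: "\<exists>rank :: 'v \<Rightarrow> nat. \<forall>(c, p) \<in> tree_rel M s. rank p < rank c"
    and distinct_rest: "distinct (rest s)"
    and rest_free: "set (rest s) \<subseteq> set fs"
    and labelled_rest_on_cp: "f \<in> set (rest s) \<Longrightarrow> lab s f \<noteq> None \<Longrightarrow> \<exists>p\<in>cp s. f = fst p \<or> f = snd p"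
    and older_frames_avoid_subtrees: "older_frames_avoid (is_base s) (subtree M s) (stk s)"
    and scanned_subtree_inactive:
      "v \<in> scanned s \<Longrightarrow> is_base s v \<Longrightarrow> stack_vertices (stk s) \<inter> subtree M s v = {}"
begin

abbreviation T where "T \<equiv> tree_rel M s"

lemma tree_rel_cases:
  assumes "(c, p) \<in> T"
  obtains (odd) "lab s c = Some Odd" "p = bse s (par s c)" "is_base s p"
    | (base) "is_base s c" "matched M c" "p = mate M c" "lab s p = Some Odd"
proof (cases "lab s c")
  case (Some l)
  have parent: "node_parent M s c = Some p" using assms by (simp add: tree_rel_def)
  show ?thesis
  proof (cases l)
    case Odd
    then show ?thesis using odd parent Some base_even[OF par_even] by (simp add: node_parent_def)
  next
    case Even
    then show ?thesis using base parent Some base_mate_odd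
      by (simp add: node_parent_def is_base_def split: if_splits)
  qed
qed (use assms in \<open>simp add: tree_rel_def node_parent_def\<close>)

lemma tree_rel_labelled: "(c, p) \<in> T \<Longrightarrow> lab s c \<noteq> None \<and> lab s p \<noteq> None"
  by (erule tree_rel_cases) (auto simp: is_base_def)

lemma rtrancl_tree_rel_labelled: "(a, b) \<in> T\<^sup>* \<Longrightarrow> lab s a \<noteq> None \<Longrightarrow> lab s b \<noteq> None"
  by (induction rule: rtrancl_induct) (auto dest: tree_rel_labelled)

lemma rtrancl_tree_rel_node:
  "(a, b) \<in> T\<^sup>* \<Longrightarrow> lab s a = Some Odd \<or> is_base s a \<Longrightarrow> lab s b = Some Odd \<or> is_base s b"
  by (induction rule: rtrancl_induct) (auto elim: tree_rel_cases)

lemma tree_rel_acyclic: "(a, a) \<notin> T\<^sup>+"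
proof
  obtain rank :: "'v \<Rightarrow> nat" where rank: "\<And>c p. (c, p) \<in> T \<Longrightarrow> rank p < rank c"
    using tree_rel_ranked by blast
  have "rank b < rank a" if "(a, b) \<in> T\<^sup>+" for a b
    using that by (induction rule: trancl_induct) (auto dest: rank)
  then show "(a, a) \<in> T\<^sup>+ \<Longrightarrow> False" by blast
qed

lemma rtrancl_tree_rel_comparable:
  "(a, b) \<in> T\<^sup>* \<Longrightarrow> (a, c) \<in> T\<^sup>* \<Longrightarrow> (b, c) \<in> T\<^sup>* \<or> (c, b) \<in> T\<^sup>*"
  by (rule single_valued_confluent[OF single_valued_tree_rel])

lemma node_of_labelled: "lab s w \<noteq> None \<Longrightarrow> lab s (node_of s w) \<noteq> None"
proof -
  assume "lab s w \<noteq> None"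
  then obtain l where "lab s w = Some l" by blast
  then show ?thesis using base_even[of w] by (cases l) (auto simp: node_of_def is_base_def)
qed

lemma subtree_unlabelled: "lab s v = None \<Longrightarrow> subtree M s v = {}"
  using rtrancl_tree_rel_labelled node_of_labelled by (fastforce simp: subtree_def)

lemma even_in_subtree: "lab s x = Some Even \<Longrightarrow> (bse s x, v) \<in> T\<^sup>* \<Longrightarrow> x \<in> subtree M s v"
  by (simp add: subtree_def node_of_def)

lemma rtrancl_tree_rel_conservative:
  assumes ext: "conservative_extension M s s'" and c: "lab s c \<noteq> None"
  shows "(c, v) \<in> (tree_rel M s')\<^sup>* \<longleftrightarrow> (c, v) \<in> T\<^sup>*"
proof
  assume "(c, v) \<in> (tree_rel M s')\<^sup>*"
  then show "(c, v) \<in> T\<^sup>*"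
  proof (induction rule: rtrancl_induct)
    case (step v w)
    then have "lab s v \<noteq> None" using rtrancl_tree_rel_labelled c by blast
    then have "(v, w) \<in> T"
      using step(2) conservative_extensionD(3)[OF ext] by (simp add: tree_rel_def)
    then show ?case using step(3) by simp
  qed simp
next
  assume "(c, v) \<in> T\<^sup>*"
  then show "(c, v) \<in> (tree_rel M s')\<^sup>*"
  proof (induction rule: rtrancl_induct)
    case (step v w)
    then have "lab s v \<noteq> None" using rtrancl_tree_rel_labelled c by blast
    then have "(v, w) \<in> tree_rel M s'"
      using step(2) conservative_extensionD(3)[OF ext] by (simp add: tree_rel_def)
    then show ?case using step(3) by simp
  qed simp
qed

lemma trancl_tree_rel_conservative:
  assumes ext: "conservative_extension M s s'" and c: "lab s c \<noteq> None"
  shows "(c, v) \<in> (tree_rel M s')\<^sup>+ \<longleftrightarrow> (c, v) \<in> T\<^sup>+"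
proof -
  have edge: "(c, d) \<in> tree_rel M s' \<longleftrightarrow> (c, d) \<in> T" for d
    using conservative_extensionD(3)[OF ext c] by (simp add: tree_rel_def)
  have path: "(c, d) \<in> T \<Longrightarrow> (d, v) \<in> (tree_rel M s')\<^sup>* \<longleftrightarrow> (d, v) \<in> T\<^sup>*" for d
    using rtrancl_tree_rel_conservative[OF ext] tree_rel_labelled by blast
  show ?thesis unfolding trancl_unfold_left relcomp_unfold using edge path by blast
qed

lemma subtree_conservative:
  assumes ext: "conservative_extension M s s'" and w: "lab s w \<noteq> None"
  shows "w \<in> subtree M s' v \<longleftrightarrow> w \<in> subtree M s v"
  using rtrancl_tree_rel_conservative[OF ext node_of_labelled[OF w]] w
    conservative_extensionD(1,2)[OF ext w]
  by (simp add: subtree_def)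

lemma inactive_path_conservative:
  assumes ext: "conservative_extension M s s'" and s': "search_state V E M fs s'"
    and t: "lab s t \<noteq> None" and path: "inactive_path M s a t"
  shows "inactive_path M s' a t"
proof (rule inactive_pathI)
  have a: "lab s a \<noteq> None"
    using inactive_pathD(1)[OF path] tree_rel_labelled by (metis tranclD)
  have node_t: "node_of s' t = node_of s t" using conservative_extensionD(2)[OF ext t] .
  show "(a, node_of s' t) \<in> (tree_rel M s')\<^sup>+"
    unfolding node_t trancl_tree_rel_conservative[OF ext a] by (rule inactive_pathD(1)[OF path])
  fix w
  assume w: "w \<in> stack_vertices (stk s')" and "(a, node_of s' w) \<in> (tree_rel M s')\<^sup>*"
    and up: "(node_of s' w, node_of s' t) \<in> (tree_rel M s')\<^sup>+"
  then have a_w: "(a, node_of s' w) \<in> T\<^sup>*" using rtrancl_tree_rel_conservative[OF ext a] by simp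
  then have node_w: "lab s (node_of s' w) \<noteq> None" using rtrancl_tree_rel_labelled a by simp
  have "lab s' w \<noteq> None" using search_state.stack_even[OF s' w] by simp
  then have w_old: "lab s w \<noteq> None"
    using conservative_extensionD(4)[OF ext, of w] node_w by auto
  then have "w \<in> stack_vertices (stk s)"
    using w conservative_extensionD(5)[OF ext] by auto
  moreover have "(node_of s w, node_of s t) \<in> T\<^sup>+"
    using up unfolding node_t conservative_extensionD(2)[OF ext w_old, symmetric]
    trancl_tree_rel_conservative[OF ext node_w] .
  moreover have "(a, node_of s w) \<in> T\<^sup>*"
    using a_w unfolding conservative_extensionD(2)[OF ext w_old] .
  ultimately show False using inactive_pathD(2)[OF path] by blast
qed

lemma inactive_path_below_scanned_mate:
  assumes t: "lab s t = Some Odd" and tt': "{t, t'} \<in> M" and scanned: "t' \<in> scanned s"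
    and below: "(a, t) \<in> T\<^sup>+"
  shows "inactive_path M s a t"
proof (rule inactive_pathI)
  have node_t: "node_of s t = t" using t by (simp add: node_of_def)
  then show "(a, node_of s t) \<in> T\<^sup>+" using below by simp
  have mate_t: "mate M t = t'" using mate_eqI[of t' t] tt' by (simp add: insert_commute)
  have "matched M t" using tt' unfolding matched_def by (metis insert_commute)
  then have base: "is_base s t'" using odd_mate_base[OF t] mate_t by simp
  fix w
  assume active: "w \<in> stack_vertices (stk s)" and "(node_of s w, node_of s t) \<in> T\<^sup>+"
  then obtain c where c: "(node_of s w, c) \<in> T\<^sup>*" "(c, t) \<in> T"
    unfolding node_t by (metis tranclD2)
  from c(2) have "c = t'"
  proof (cases rule: tree_rel_cases)
    case odd
    then show ?thesis using t by (simp add: is_base_def)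
  next
    case base
    then show ?thesis using mate_t mate_mate by metis
  qed
  then have "w \<in> subtree M s t'" using c(1) stack_even[OF active] by (simp add: subtree_def)
  then show False using scanned_subtree_inactive[OF scanned base] active by blast
qed

end

section \<open>Steps that extend the search structure\<close>

locale new_tree_step = search_state V E M fs s for V :: "'v set" and E M fs s +
  fixes f :: 'v and fs' :: "'v list" and s' :: "'v st"
  assumes stk_empty: "stk s = []" and rest_eq: "rest s = f # fs'"
    and root_not_on_cp: "\<not> (\<exists>p\<in>cp s. f = fst p \<or> f = snd p)"
    and succ: "s' = s\<lparr>lab := (lab s)(f := Some Even), bse := (bse s)(f := f),
                  stk := [Scan f (nm_nbrs E M f)], rest := fs', cur_root := f\<rparr>"
begin

lemma succ_simps:
  "lab s' = (lab s)(f := Some Even)" "bse s' = (bse s)(f := f)" "par s' = par s"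
  "stk s' = [Scan f (nm_nbrs E M f)]" "rest s' = fs'" "scanned s' = scanned s" "cp s' = cp s"
  by (simp_all add: succ)

lemma root_unlabelled: "lab s f = None"
  using labelled_rest_on_cp[of f] rest_eq root_not_on_cp by (cases "lab s f") auto

lemma root_free: "\<not> matched M f"
  using rest_free rest_eq set_free by auto

lemma node_parent_succ: "node_parent M s' c = node_parent M s c"
proof (cases "c = f")
  case True
  then show ?thesis using root_unlabelled root_free by (simp add: node_parent_def succ)
next
  case False
  have "lab s (par s c) = Some Even" if "lab s c = Some Odd"
    using par_even[OF that] .
  then show ?thesis using False root_unlabelled
    by (cases "lab s c") (auto simp: node_parent_def succ split: lbl.split)
qed

lemma tree_rel_succ: "tree_rel M s' = T"
  by (simp add: tree_rel_def node_parent_succ)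

lemma root_not_in_subtree: "lab s v \<noteq> None \<Longrightarrow> f \<notin> subtree M s' v"
proof
  assume "lab s v \<noteq> None" and "f \<in> subtree M s' v"
  then have "(f, v) \<in> T\<^sup>*" "f \<noteq> v"
    using root_unlabelled by (auto simp: subtree_def node_of_def succ_simps tree_rel_succ)
  then obtain c where "(f, c) \<in> T" by (metis converse_rtranclE)
  then show False using tree_rel_labelled root_unlabelled by blast
qed

lemma search_state_succ: "search_state V E M fs s'"
proof unfold_locales
  fix v
  show "lab s' v = Some Even \<Longrightarrow> is_base s' (bse s' v)"
    using base_even[of v] root_unlabelled by (auto simp: succ_simps is_base_def)
  show "lab s' v = Some Odd \<Longrightarrow> lab s' (par s' v) = Some Even"
    using par_even[of v] root_unlabelled by (auto simp: succ_simps split: if_splits)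
  show "lab s' v = Some Odd \<Longrightarrow> matched M v \<Longrightarrow> is_base s' (mate M v)"
    using odd_mate_base[of v] root_unlabelled by (auto simp: succ_simps is_base_def split: if_splits)
  show "lab s' (mate M v) = Some Odd" if "is_base s' v" "matched M v"
  proof -
    have "v \<noteq> f" "mate M v \<noteq> f" using that(2) root_free matched_mate by auto
    then show ?thesis using that base_mate_odd[of v] by (simp add: succ_simps is_base_def)
  qed
  show "lab s' v \<noteq> None \<Longrightarrow> matched M v \<Longrightarrow> lab s' (mate M v) \<noteq> None"
    using mate_labelled[of v] root_free by (auto simp: succ_simps split: if_splits)
  show "v \<in> stack_vertices (stk s') \<Longrightarrow> lab s' v = Some Even"
    by (simp add: succ_simps)
  show "v \<in> pending_calls (stk s') \<Longrightarrow> bse s' v \<noteq> v"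
    by (simp add: succ_simps)
  show "v \<in> scanned s' \<Longrightarrow> lab s' v = Some Even"
    using scanned_even[of v] root_unlabelled by (auto simp: succ_simps)
  show "\<exists>rank :: 'v \<Rightarrow> nat. \<forall>(c, p) \<in> tree_rel M s'. rank p < rank c"
    using tree_rel_ranked by (simp add: tree_rel_succ)
  show "distinct (rest s')" "set (rest s') \<subseteq> set fs"
    using distinct_rest rest_free by (auto simp: succ_simps rest_eq)
  show "\<exists>p\<in>cp s'. v = fst p \<or> v = snd p" if "v \<in> set (rest s')" "lab s' v \<noteq> None"
    using that labelled_rest_on_cp[of v] distinct_rest
    by (auto simp: succ_simps rest_eq split: if_splits)
  show "older_frames_avoid (is_base s') (subtree M s') (stk s')"
    by (simp add: succ_simps)
  show "stack_vertices (stk s') \<inter> subtree M s' v = {}" if "v \<in> scanned s'" "is_base s' v"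
    using that scanned_even[of v] root_not_in_subtree[of v] by (simp add: succ_simps)
qed

lemma conservative: "conservative_extension M s s'"
  using root_unlabelled
  by (auto simp: conservative_extension_def node_parent_succ node_of_def succ_simps)

end

locale augment_step = search_state V E M fs s for V :: "'v set" and E M fs s +
  fixes x :: 'v and R :: "'v set" and rs :: "'v frame list" and y :: 'v and s' :: "'v st"
  assumes stk_eq: "stk s = Scan x R # rs" and y_unlabelled: "lab s y = None"
    and y_free: "\<not> matched M y"
    and succ: "s' = s\<lparr>lab := (lab s)(y := Some Odd), par := (par s)(y := x),
                  cp := insert (cur_root s, y) (cp s), stk := []\<rparr>"
begin

lemma succ_simps:
  "lab s' = (lab s)(y := Some Odd)" "par s' = (par s)(y := x)" "bse s' = bse s" "stk s' = []"
  "rest s' = rest s" "scanned s' = scanned s" "cp s' = insert (cur_root s, y) (cp s)"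
  by (simp_all add: succ)

lemma x_even: "lab s x = Some Even"
  using stack_even[of x] stk_eq by simp

lemma node_parent_succ:
  "node_parent M s' c = (if c = y then Some (bse s x) else node_parent M s c)"
  by (auto simp: node_parent_def succ_simps split: option.split lbl.split)

lemma tree_rel_succ_iff: "(c, p) \<in> tree_rel M s' \<longleftrightarrow> (c, p) \<in> T \<or> (c = y \<and> p = bse s x)"
  using tree_rel_labelled[of y p] y_unlabelled by (auto simp: tree_rel_def node_parent_succ)

lemma search_state_succ: "search_state V E M fs s'"
proof unfold_locales
  fix v
  show "lab s' v = Some Even \<Longrightarrow> is_base s' (bse s' v)"
    using base_even[of v] y_unlabelled by (auto simp: succ_simps is_base_def split: if_splits)
  show "lab s' v = Some Odd \<Longrightarrow> lab s' (par s' v) = Some Even"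
    using par_even[of v] x_even y_unlabelled by (auto simp: succ_simps split: if_splits)
  show "lab s' v = Some Odd \<Longrightarrow> matched M v \<Longrightarrow> is_base s' (mate M v)"
    using odd_mate_base[of v] y_unlabelled y_free
    by (auto simp: succ_simps is_base_def split: if_splits)
  show "is_base s' v \<Longrightarrow> matched M v \<Longrightarrow> lab s' (mate M v) = Some Odd"
    using base_mate_odd[of v] y_unlabelled y_free
    by (auto simp: succ_simps is_base_def split: if_splits)
  show "lab s' v \<noteq> None \<Longrightarrow> matched M v \<Longrightarrow> lab s' (mate M v) \<noteq> None"
    using mate_labelled[of v] y_free by (auto simp: succ_simps split: if_splits)
  show "v \<in> stack_vertices (stk s') \<Longrightarrow> lab s' v = Some Even"
    "v \<in> pending_calls (stk s') \<Longrightarrow> bse s' v \<noteq> v"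
    by (simp_all add: succ_simps)
  show "v \<in> scanned s' \<Longrightarrow> lab s' v = Some Even"
    using scanned_even[of v] y_unlabelled by (auto simp: succ_simps)
  show "\<exists>rank :: 'v \<Rightarrow> nat. \<forall>(c, p) \<in> tree_rel M s'. rank p < rank c"
  proof -
    obtain rank :: "'v \<Rightarrow> nat" where rank: "\<And>c p. (c, p) \<in> T \<Longrightarrow> rank p < rank c"
      using tree_rel_ranked by blast
    have "bse s x \<noteq> y" using x_even base_even y_unlabelled by (auto simp: is_base_def)
    then have "(rank(y := rank (bse s x) + 1)) p < (rank(y := rank (bse s x) + 1)) c"
      if "(c, p) \<in> tree_rel M s'" for c p
      using that rank tree_rel_labelled y_unlabelled by (fastforce simp: tree_rel_succ_iff)
    then show ?thesis by blast
  qed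
  show "distinct (rest s')" "set (rest s') \<subseteq> set fs"
    using distinct_rest rest_free by (simp_all add: succ_simps)
  show "\<exists>p\<in>cp s'. v = fst p \<or> v = snd p" if "v \<in> set (rest s')" "lab s' v \<noteq> None"
    using that labelled_rest_on_cp[of v] by (auto simp: succ_simps split: if_splits)
  show "older_frames_avoid (is_base s') (subtree M s') (stk s')"
    "stack_vertices (stk s') \<inter> subtree M s' v = {}"
    by (simp_all add: succ_simps)
qed

lemma conservative: "conservative_extension M s s'"
  using y_unlabelled
  by (intro conservative_extensionI) (auto simp: node_parent_succ node_of_def succ_simps)

end

locale grow_step = search_state V E M fs s for V :: "'v set" and E M fs s +
  fixes x :: 'v and R :: "'v set" and rs :: "'v frame list" and y :: 'v and s' :: "'v st"
  assumes stk_eq: "stk s = Scan x R # rs" and y_unlabelled: "lab s y = None"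
    and y_matched: "matched M y"
    and succ: "s' = s\<lparr>lab := (lab s)(y := Some Odd, mate M y := Some Even),
                  par := (par s)(y := x), bse := (bse s)(mate M y := mate M y),
                  stk := Scan (mate M y) (nm_nbrs E M (mate M y)) # Scan x (R - {y}) # rs\<rparr>"
begin

abbreviation y' where "y' \<equiv> mate M y"

lemma succ_simps:
  "lab s' = (lab s)(y := Some Odd, y' := Some Even)" "par s' = (par s)(y := x)"
  "bse s' = (bse s)(y' := y')" "stk s' = Scan y' (nm_nbrs E M y') # Scan x (R - {y}) # rs"
  "rest s' = rest s" "scanned s' = scanned s" "cp s' = cp s"
  by (simp_all add: succ)

lemma y'_neq_y: "y' \<noteq> y"
  using mate_neq[OF y_matched] .

lemma mate_y': "matched M y'" "mate M y' = y"
  using matched_mate[OF y_matched] mate_mate[OF y_matched] by auto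

lemma y'_unlabelled: "lab s y' = None"
  using mate_labelled mate_y' y_unlabelled by (metis option.exhaust)

lemma x_even: "lab s x = Some Even"
  using stack_even[of x] stk_eq by simp

lemma bse_x_even: "lab s (bse s x) = Some Even"
  using base_even[OF x_even] by (simp add: is_base_def)

lemma labelled_neq: "lab s v \<noteq> None \<Longrightarrow> v \<noteq> y \<and> v \<noteq> y'"
  using y_unlabelled y'_unlabelled by auto

lemma node_parent_succ:
  "node_parent M s' c =
     (if c = y then Some (bse s x) else if c = y' then Some y else node_parent M s c)"
proof -
  have "par s c \<noteq> y'" if "lab s c = Some Odd"
    using par_even[OF that] y'_unlabelled by auto
  moreover have "x \<noteq> y'" using x_even labelled_neq by blast
  ultimately show ?thesis using y'_neq_y mate_y'
    by (auto simp: node_parent_def succ_simps split: option.split lbl.split)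
qed

lemma tree_rel_succ_iff:
  "(c, p) \<in> tree_rel M s' \<longleftrightarrow> (c, p) \<in> T \<or> (c = y \<and> p = bse s x) \<or> (c = y' \<and> p = y)"
  using tree_rel_labelled[of c p] labelled_neq y'_neq_y
  by (auto simp: tree_rel_def node_parent_succ)

lemma conservative: "conservative_extension M s s'"
proof (rule conservative_extensionI)
  fix v
  assume "lab s v \<noteq> None"
  then show "lab s' v = lab s v" "node_of s' v = node_of s v"
    "node_parent M s' v = node_parent M s v"
    using labelled_neq[of v] by (auto simp: succ_simps node_of_def node_parent_succ)
next
  fix v
  assume "lab s v = None" "lab s' v \<noteq> None"
  then show "lab s (node_of s' v) = None"
    using y'_neq_y y_unlabelled y'_unlabelled by (auto simp: succ_simps node_of_def)
next
  show "stack_vertices (stk s') \<subseteq> stack_vertices (stk s) \<union> {v. lab s v = None}"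
    using y'_unlabelled stk_eq by (auto simp: succ_simps)
qed

lemma y'_path: "lab s v \<noteq> None \<Longrightarrow> (y', v) \<in> (tree_rel M s')\<^sup>* \<Longrightarrow> (bse s x, v) \<in> T\<^sup>*"
proof -
  assume v: "lab s v \<noteq> None" and y'v: "(y', v) \<in> (tree_rel M s')\<^sup>*"
  have "y' \<noteq> v" "y \<noteq> v" using v labelled_neq by auto
  with y'v obtain c where "(y', c) \<in> tree_rel M s'" "(c, v) \<in> (tree_rel M s')\<^sup>*"
    by (metis converse_rtranclE)
  moreover have "c = y"
    using calculation(1) y'_unlabelled y'_neq_y tree_rel_labelled[of y' c]
    unfolding tree_rel_succ_iff by auto
  ultimately obtain d where "(y, d) \<in> tree_rel M s'" "(d, v) \<in> (tree_rel M s')\<^sup>*"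
    using \<open>y \<noteq> v\<close> by (metis converse_rtranclE)
  moreover have "d = bse s x"
    using calculation(1) y_unlabelled y'_neq_y tree_rel_labelled[of y d]
    unfolding tree_rel_succ_iff by auto
  ultimately show ?thesis
    using rtrancl_tree_rel_conservative[OF conservative] bse_x_even by simp
qed

lemma older_frames_avoid_succ: "older_frames_avoid (is_base s') (subtree M s') (stk s')"
proof -
  let ?old = "Scan x (R - {y}) # rs"
  have old_labelled: "lab s w \<noteq> None" if "w \<in> stack_vertices ?old" for w
    using that stack_even stk_eq by auto
  have "older_frames_avoid (is_base s) (subtree M s) ?old"
    using older_frames_avoid_subtrees stk_eq by simp
  then have "older_frames_avoid (is_base s') (subtree M s') ?old"
  proof (rule older_frames_avoid_mono)
    fix v w
    assume "v \<in> stack_vertices ?old" "is_base s' v" "w \<in> stack_vertices ?old" "w \<in> subtree M s' v"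
    then show "is_base s v \<and> w \<in> subtree M s v"
      using old_labelled labelled_neq subtree_conservative[OF conservative]
      by (auto simp: is_base_def succ_simps)
  qed
  moreover have "stack_vertices ?old \<inter> subtree M s' y' = {}"
    using old_labelled subtree_conservative[OF conservative] subtree_unlabelled[OF y'_unlabelled]
    by blast
  ultimately show ?thesis by (simp add: succ_simps)
qed

lemma scanned_subtree_inactive_succ:
  assumes "v \<in> scanned s'" "is_base s' v"
  shows "stack_vertices (stk s') \<inter> subtree M s' v = {}"
proof -
  have v: "v \<in> scanned s" "lab s v \<noteq> None" "is_base s v"
    using assms scanned_even labelled_neq by (auto simp: succ_simps is_base_def)
  then have inactive: "stack_vertices (stk s) \<inter> subtree M s v = {}"
    using scanned_subtree_inactive by blast
  have "y' \<notin> subtree M s' v"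
  proof
    assume "y' \<in> subtree M s' v"
    then have "(bse s x, v) \<in> T\<^sup>*"
      using y'_path v(2) y'_neq_y by (simp add: subtree_def node_of_def succ_simps)
    then show False
      using inactive even_in_subtree[OF x_even] stk_eq by auto
  qed
  moreover have "w \<notin> subtree M s' v" if "w \<in> stack_vertices (stk s)" for w
    using that inactive stack_even[OF that] subtree_conservative[OF conservative, of w v] by auto
  moreover have "stack_vertices (stk s') = insert y' (stack_vertices (stk s))"
    using stk_eq by (auto simp: succ_simps)
  ultimately show ?thesis by auto
qed

lemma lab_succ: "lab s' v = (if v = y then Some Odd else if v = y' then Some Even else lab s v)"
  using y'_neq_y by (simp add: succ_simps)

lemma base_even_succ: "lab s' v = Some Even \<Longrightarrow> is_base s' (bse s' v)"
proof (cases "v = y'")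
  case False
  assume "lab s' v = Some Even"
  then have "lab s v = Some Even" using False by (simp add: lab_succ split: if_splits)
  then show ?thesis using False base_even[of v] labelled_neq[of "bse s v"]
    by (simp add: is_base_def lab_succ succ_simps)
qed (simp add: is_base_def lab_succ succ_simps)

lemma par_even_succ: "lab s' v = Some Odd \<Longrightarrow> lab s' (par s' v) = Some Even"
proof (cases "v = y")
  case False
  assume "lab s' v = Some Odd"
  then have "lab s v = Some Odd" using False by (simp add: lab_succ split: if_splits)
  then show ?thesis using False par_even[of v] labelled_neq[of "par s v"]
    by (simp add: lab_succ succ_simps)
qed (use x_even labelled_neq[of x] in \<open>simp add: lab_succ succ_simps\<close>)

lemma odd_mate_base_succ: "lab s' v = Some Odd \<Longrightarrow> matched M v \<Longrightarrow> is_base s' (mate M v)"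
proof (cases "v = y")
  case False
  assume "lab s' v = Some Odd" "matched M v"
  then have "lab s v = Some Odd" using False by (simp add: lab_succ split: if_splits)
  then show ?thesis using \<open>matched M v\<close> odd_mate_base[of v] labelled_neq[of "mate M v"]
    by (simp add: is_base_def lab_succ succ_simps)
qed (simp add: is_base_def lab_succ succ_simps)

lemma base_mate_odd_succ: "is_base s' v \<Longrightarrow> matched M v \<Longrightarrow> lab s' (mate M v) = Some Odd"
proof (cases "v = y'")
  case False
  assume "is_base s' v" "matched M v"
  then have "is_base s v" "v \<noteq> y"
    using False by (auto simp: is_base_def lab_succ succ_simps split: if_splits)
  then show ?thesis using \<open>matched M v\<close> base_mate_odd[of v] labelled_neq[of "mate M v"]
    by (simp add: lab_succ)
qed (simp add: lab_succ mate_y')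

lemma tree_rel_ranked_succ: "\<exists>rank :: 'v \<Rightarrow> nat. \<forall>(c, p) \<in> tree_rel M s'. rank p < rank c"
proof -
  obtain rank :: "'v \<Rightarrow> nat" where rank: "\<And>c p. (c, p) \<in> T \<Longrightarrow> rank p < rank c"
    using tree_rel_ranked by blast
  define rank' where "rank' = rank(y := rank (bse s x) + 1, y' := rank (bse s x) + 2)"
  have "rank' p < rank' c" if edge: "(c, p) \<in> tree_rel M s'" for c p
  proof -
    have "bse s x \<noteq> y \<and> bse s x \<noteq> y'" using labelled_neq bse_x_even by simp
    moreover have "c \<noteq> y \<and> c \<noteq> y' \<and> p \<noteq> y \<and> p \<noteq> y'" if "(c, p) \<in> T"
      using tree_rel_labelled[OF that] labelled_neq[of c] labelled_neq[of p] by blast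
    ultimately show ?thesis
      using edge rank[of c p] y'_neq_y by (auto simp: tree_rel_succ_iff rank'_def)
  qed
  then show ?thesis by blast
qed

lemma search_state_succ: "search_state V E M fs s'"
proof unfold_locales
  fix v
  show "lab s' (mate M v) \<noteq> None" if "lab s' v \<noteq> None" "matched M v"
    using that mate_labelled[of v] mate_y' by (simp add: lab_succ split: if_splits)
  show "lab s' v = Some Even" if "v \<in> stack_vertices (stk s')"
  proof (cases "v = y'")
    case False
    then have "lab s v = Some Even" using that stack_even[of v] stk_eq by (auto simp: succ_simps)
    then show ?thesis using labelled_neq[of v] by (simp add: lab_succ)
  qed (simp add: lab_succ y'_neq_y)
  show "bse s' v \<noteq> v" if "v \<in> pending_calls (stk s')"
  proof -
    have "v \<in> pending_calls (stk s)" using that stk_eq by (simp add: succ_simps)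
    moreover from this have "v \<noteq> y'"
      using pending_calls_subset_stack_vertices stack_even labelled_neq by fastforce
    ultimately show ?thesis using pending_not_base by (simp add: succ_simps)
  qed
  show "lab s' v = Some Even" if "v \<in> scanned s'"
    using that scanned_even[of v] labelled_neq[of v] by (simp add: lab_succ succ_simps)
  have "v \<noteq> y \<and> v \<noteq> y'" if "v \<in> set (rest s)"
    using that rest_free set_free y_matched mate_y' by auto
  then show "distinct (rest s')" "set (rest s') \<subseteq> set fs"
    "v \<in> set (rest s') \<Longrightarrow> lab s' v \<noteq> None \<Longrightarrow> \<exists>p\<in>cp s'. v = fst p \<or> v = snd p"
    using distinct_rest rest_free labelled_rest_on_cp[of v] by (auto simp: succ_simps lab_succ)
qed (use base_even_succ par_even_succ odd_mate_base_succ base_mate_odd_succ tree_rel_ranked_succ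
      older_frames_avoid_succ scanned_subtree_inactive_succ in blast)+

end

section \<open>Blossom steps\<close>

locale blossom_contraction = search_state V E M fs s for V :: "'v set" and E M fs s +
  fixes x :: 'v and R :: "'v set" and rs :: "'v frame list" and y :: 'v and us :: "'v list"
    and P :: "'v set" and s' :: "'v st"
  assumes stk_eq: "stk s = Scan x R # rs" and y_even: "lab s y = Some Even"
    and base_y_below: "(bse s y, bse s x) \<in> T\<^sup>+"
    and P_eq: "P = {n. (bse s y, n) \<in> T\<^sup>* \<and> (n, bse s x) \<in> T\<^sup>*}"
    and set_us: "set us = {v \<in> P. lab s v = Some Odd}"
    and succ: "s' = s\<lparr>lab := (\<lambda>v. if (v \<in> P \<and> lab s v = Some Odd) \<or> (lab s v = Some Even \<and> bse s v \<in> P)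
                                 then Some Even else lab s v),
                  bse := (\<lambda>v. if (v \<in> P \<and> lab s v = Some Odd) \<or> (lab s v = Some Even \<and> bse s v \<in> P)
                                 then bse s x else bse s v),
                  stk := Calls us # Scan x (R - {y}) # rs\<rparr>"
begin

abbreviation B where "B \<equiv> bse s x"
abbreviation T' where "T' \<equiv> tree_rel M s'"

definition in_blossom :: "'v \<Rightarrow> bool" where
  "in_blossom v \<longleftrightarrow> (v \<in> P \<and> lab s v = Some Odd) \<or> (lab s v = Some Even \<and> bse s v \<in> P)"

definition contract :: "'v \<Rightarrow> 'v" where
  "contract n = (if n \<in> P then B else n)"

lemma mem_P: "n \<in> P \<longleftrightarrow> (bse s y, n) \<in> T\<^sup>* \<and> (n, B) \<in> T\<^sup>*"
  by (simp add: P_eq)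

lemma succ_simps:
  "lab s' v = (if in_blossom v then Some Even else lab s v)"
  "bse s' v = (if in_blossom v then B else bse s v)"
  "par s' = par s" "stk s' = Calls us # Scan x (R - {y}) # rs"
  "rest s' = rest s" "scanned s' = scanned s" "cp s' = cp s"
  by (simp_all add: succ in_blossom_def)

lemma x_even: "lab s x = Some Even"
  using stack_even[of x] stk_eq by simp

lemma B_base: "is_base s B"
  using base_even[OF x_even] .

lemma node_of_x: "node_of s x = B"
  using x_even by (simp add: node_of_def)

lemma B_in_P: "B \<in> P"
  using base_y_below by (simp add: mem_P)

lemma P_node: "n \<in> P \<Longrightarrow> lab s n = Some Odd \<or> is_base s n"
  using rtrancl_tree_rel_node base_even[OF y_even] by (auto simp: mem_P)

lemma P_labelled: "n \<in> P \<Longrightarrow> lab s n \<noteq> None"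
  using P_node by (auto simp: is_base_def)

lemma parent_in_P:
  assumes c: "c \<in> P" "c \<noteq> B" and p: "(c, p) \<in> T"
  shows "p \<in> P"
proof -
  from c obtain p' where "(c, p') \<in> T" "(p', B) \<in> T\<^sup>*"
    by (auto simp: mem_P elim: converse_rtranclE)
  moreover have "p' = p"
    using single_valued_tree_rel[of M s] p calculation(1) unfolding single_valued_def by blast
  ultimately show ?thesis using c p by (auto simp: mem_P)
qed

lemma parent_B_not_in_P: "(B, p) \<in> T \<Longrightarrow> p \<notin> P"
  unfolding mem_P using tree_rel_acyclic[of B] rtrancl_into_trancl2[of B p] by blast

lemma mate_not_in_P:
  assumes base: "is_base s v" and matched: "matched M v" and v: "v \<notin> P"
  shows "mate M v \<notin> P"
proof
  assume m: "mate M v \<in> P"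
  have odd: "lab s (mate M v) = Some Odd" using base_mate_odd[OF base matched] .
  then have "mate M v \<noteq> bse s y" using base_even[OF y_even] by (auto simp: is_base_def)
  with m obtain c where c: "(bse s y, c) \<in> T\<^sup>*" "(c, mate M v) \<in> T"
    by (auto simp: mem_P elim: rtranclE)
  then have "c \<in> P" using m by (auto simp: mem_P)
  from c(2) show False
  proof (cases rule: tree_rel_cases)
    case odd
    then show False using \<open>lab s (mate M v) = Some Odd\<close> by (simp add: is_base_def)
  next
    case base
    then have "c = v" using matched mate_mate by metis
    then show False using \<open>c \<in> P\<close> v by simp
  qed
qed

lemma in_blossom_iff: "in_blossom v \<longleftrightarrow> lab s v \<noteq> None \<and> node_of s v \<in> P"
proof (cases "lab s v")
  case (Some l)
  then show ?thesis by (cases l) (auto simp: in_blossom_def node_of_def)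
qed (simp add: in_blossom_def)

lemma in_blossom_base: "is_base s v \<Longrightarrow> in_blossom v \<longleftrightarrow> v \<in> P"
  by (simp add: in_blossom_def is_base_def)

lemma even_succ: "lab s v = Some Even \<Longrightarrow> lab s' v = Some Even"
  by (simp add: succ_simps)

lemma labelled_succ: "lab s' v \<noteq> None \<longleftrightarrow> lab s v \<noteq> None"
  by (simp add: succ_simps in_blossom_iff)

lemma contract_fixed: "contract v = v \<longleftrightarrow> v \<notin> P \<or> v = B"
  by (auto simp: contract_def)

lemma contract_idem: "contract (contract n) = contract n"
  using B_in_P by (simp add: contract_def)

lemma node_of_succ: "lab s w \<noteq> None \<Longrightarrow> node_of s' w = contract (node_of s w)"
  by (cases "in_blossom w") (auto simp: node_of_def succ_simps contract_def in_blossom_iff)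

lemma bse_succ_even: "lab s v = Some Even \<Longrightarrow> bse s' v = contract (bse s v)"
  by (simp add: succ_simps in_blossom_def contract_def)

lemma contract_mate_B: "matched M B \<Longrightarrow> contract (mate M B) = mate M B"
  using B_base parent_B_not_in_P[of "mate M B"]
  by (simp add: contract_def tree_rel_def node_parent_def is_base_def)

lemma node_parent_succ:
  "node_parent M s' c = (if c \<in> P \<and> c \<noteq> B then None else map_option contract (node_parent M s c))"
proof (cases "lab s c")
  case None
  then show ?thesis using P_labelled by (auto simp: node_parent_def succ_simps in_blossom_iff)
next
  case (Some l)
  show ?thesis
  proof (cases l)
    case Odd
    have "lab s (par s c) = Some Even" using par_even Some Odd by simp
    moreover have "c \<noteq> B" using B_base Some Odd by (auto simp: is_base_def)
    ultimately show ?thesis using Some Odd B_in_P bse_succ_even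
      by (auto simp: node_parent_def succ_simps in_blossom_def)
  next
    case Even
    show ?thesis
    proof (cases "in_blossom c")
      case True
      then have "c \<notin> P \<Longrightarrow> bse s c \<noteq> c" using Some Even by (auto simp: in_blossom_def)
      then show ?thesis using True Some Even contract_mate_B B_base
        by (auto simp: node_parent_def succ_simps is_base_def)
    next
      case False
      then have "c \<notin> P" using P_node[of c] Some Even by (auto simp: in_blossom_def is_base_def)
      then have "bse s c = c \<Longrightarrow> matched M c \<Longrightarrow> contract (mate M c) = mate M c"
        using mate_not_in_P[of c] Some Even by (simp add: is_base_def contract_def)
      then show ?thesis using False Some Even \<open>c \<notin> P\<close>
        by (auto simp: node_parent_def succ_simps)
    qed
  qed
qed

lemma tree_rel_succ_iff:
  "(c, p') \<in> T' \<longleftrightarrow> (c \<notin> P \<or> c = B) \<and> (\<exists>p. (c, p) \<in> T \<and> p' = contract p)"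
  by (auto simp: tree_rel_def node_parent_succ)

lemma rtrancl_contract: "(a, c) \<in> T\<^sup>* \<Longrightarrow> (contract a, contract c) \<in> T'\<^sup>*"
proof (induction rule: rtrancl_induct)
  case (step c d)
  show ?case
  proof (cases "c \<in> P \<and> c \<noteq> B")
    case True
    then have "contract d = contract c" using parent_in_P[of c d] step(2) by (simp add: contract_def)
    then show ?thesis using step(3) by simp
  next
    case False
    then have "(contract c, contract d) \<in> T'"
      using step(2) by (auto simp: tree_rel_succ_iff contract_def)
    then show ?thesis using step(3) by simp
  qed
qed simp

lemma rtrancl_succ_lift: "(c, v) \<in> T'\<^sup>* \<Longrightarrow> contract a = c \<Longrightarrow> \<exists>u. contract u = v \<and> (a, u) \<in> T\<^sup>*"
proof (induction arbitrary: a rule: converse_rtrancl_induct)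
  case (step c p')
  from step(1) obtain p where p: "c \<notin> P \<or> c = B" "(c, p) \<in> T" "p' = contract p"
    by (auto simp: tree_rel_succ_iff)
  obtain u where u: "contract u = v" "(p, u) \<in> T\<^sup>*" using step(3)[of p] p(3) by blast
  have "(a, c) \<in> T\<^sup>*"
    using step(4) p(1) by (cases "a \<in> P") (auto simp: contract_def mem_P)
  then have "(a, u) \<in> T\<^sup>*" using p(2) u(2) by (meson converse_rtrancl_into_rtrancl rtrancl_trans)
  then show ?case using u(1) by blast
qed blast

lemma rtrancl_succ_iff:
  assumes "contract v = v"
  shows "(contract a, v) \<in> T'\<^sup>* \<longleftrightarrow> (a, v) \<in> T\<^sup>*"
proof
  assume "(contract a, v) \<in> T'\<^sup>*"
  then obtain u where u: "contract u = v" "(a, u) \<in> T\<^sup>*" using rtrancl_succ_lift by blast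
  have "(u, v) \<in> T\<^sup>*"
    using u(1) assms by (cases "u \<in> P") (auto simp: contract_def mem_P)
  with u(2) show "(a, v) \<in> T\<^sup>*" by simp
next
  assume "(a, v) \<in> T\<^sup>*"
  then show "(contract a, v) \<in> T'\<^sup>*" using rtrancl_contract assms by metis
qed

lemma subtree_succ: "contract v = v \<Longrightarrow> subtree M s' v = subtree M s v"
  using rtrancl_succ_iff node_of_succ labelled_succ by (auto simp: subtree_def)

lemma is_base_succ: "is_base s' v \<Longrightarrow> v = B \<or> (is_base s v \<and> v \<notin> P)"
  by (auto simp: is_base_def succ_simps in_blossom_def split: if_splits)

lemma us_in_P: "u \<in> set us \<Longrightarrow> u \<in> P \<and> lab s u = Some Odd"
  using set_us by simp

lemma odd_mate_base_succ:
  assumes odd: "lab s' v = Some Odd" and matched: "matched M v"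
  shows "is_base s' (mate M v)"
proof -
  have v: "\<not> in_blossom v" "lab s v = Some Odd" using odd by (auto simp: succ_simps split: if_splits)
  then have "v \<notin> P" by (simp add: in_blossom_def)
  have base: "is_base s (mate M v)" using odd_mate_base[OF v(2) matched] .
  have "(mate M v, v) \<in> T"
    using base matched_mate[OF matched] mate_mate[OF matched]
    by (simp add: tree_rel_def node_parent_def is_base_def)
  then have "mate M v \<in> P \<Longrightarrow> mate M v = B" using parent_in_P \<open>v \<notin> P\<close> by blast
  then show ?thesis
    using base B_base B_in_P in_blossom_base[OF base] in_blossom_base[OF B_base]
    by (cases "mate M v \<in> P") (auto simp: is_base_def succ_simps)
qed

lemma base_mate_odd_succ:
  assumes base: "is_base s' v" and matched: "matched M v"
  shows "lab s' (mate M v) = Some Odd"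
proof -
  have "mate M v \<notin> P \<and> lab s (mate M v) = Some Odd"
  proof (cases "v = B")
    case True
    have "(B, mate M B) \<in> T"
      using B_base matched True by (simp add: tree_rel_def node_parent_def is_base_def)
    then show ?thesis using parent_B_not_in_P base_mate_odd[OF B_base] matched True by simp
  next
    case False
    then have "is_base s v" "v \<notin> P" using is_base_succ[OF base] by auto
    then show ?thesis using mate_not_in_P base_mate_odd matched by blast
  qed
  then show ?thesis by (simp add: succ_simps in_blossom_def)
qed

lemma tree_rel_ranked_succ: "\<exists>rank :: 'v \<Rightarrow> nat. \<forall>(c, p) \<in> T'. rank p < rank c"
proof -
  obtain rank :: "'v \<Rightarrow> nat" where rank: "\<And>c p. (c, p) \<in> T \<Longrightarrow> rank p < rank c"
    using tree_rel_ranked by blast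
  have rank_rtrancl: "rank b \<le> rank a" if "(a, b) \<in> T\<^sup>*" for a b
    using that by (induction rule: rtrancl_induct) (auto dest: rank)
  have "rank p' < rank c" if edge: "(c, p') \<in> T'" for c p'
  proof -
    obtain p where p: "(c, p) \<in> T" "p' = contract p" using edge unfolding tree_rel_succ_iff by blast
    have "p \<in> P \<Longrightarrow> rank B \<le> rank p" using rank_rtrancl by (simp add: mem_P)
    then show ?thesis using rank[OF p(1)] p(2) by (auto simp: contract_def)
  qed
  then show ?thesis by blast
qed

lemma older_frames_avoid_succ: "older_frames_avoid (is_base s') (subtree M s') (stk s')"
proof -
  have "older_frames_avoid (is_base s) (subtree M s) (Scan x (R - {y}) # rs)"
    using older_frames_avoid_subtrees stk_eq by simp
  then have "older_frames_avoid (is_base s') (subtree M s') (Scan x (R - {y}) # rs)"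
  proof (rule older_frames_avoid_mono)
    fix v w
    assume "is_base s' v" "w \<in> subtree M s' v"
    then show "is_base s v \<and> w \<in> subtree M s v"
      using is_base_succ B_base subtree_succ contract_fixed by metis
  qed
  then show ?thesis by (simp add: succ_simps)
qed

lemma scanned_subtree_inactive_succ:
  assumes scanned: "v \<in> scanned s'" and base: "is_base s' v"
  shows "stack_vertices (stk s') \<inter> subtree M s' v = {}"
proof -
  have x_active: "x \<in> stack_vertices (stk s)" using stk_eq by simp
  have x_sub: "(B, v) \<in> T\<^sup>* \<Longrightarrow> x \<in> subtree M s v" using even_in_subtree[OF x_even] .
  have scanned_old: "v \<in> scanned s" using scanned by (simp add: succ_simps)
  have "v \<noteq> B"
    using scanned_subtree_inactive[OF scanned_old] B_base x_active x_sub by blast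
  then have v: "is_base s v" "v \<notin> P" using is_base_succ[OF base] by auto
  have inactive: "stack_vertices (stk s) \<inter> subtree M s v = {}"
    using scanned_subtree_inactive[OF scanned_old v(1)] .
  have "u \<notin> subtree M s v" if u: "u \<in> set us" for u
  proof
    assume "u \<in> subtree M s v"
    then have "(u, v) \<in> T\<^sup>*" using us_in_P[OF u] by (simp add: subtree_def node_of_def)
    moreover have "(bse s y, u) \<in> T\<^sup>*" "(u, B) \<in> T\<^sup>*" using us_in_P[OF u] by (auto simp: mem_P)
    ultimately have "(bse s y, v) \<in> T\<^sup>*" "(v, B) \<in> T\<^sup>* \<or> (B, v) \<in> T\<^sup>*"
      using rtrancl_tree_rel_comparable[of u v B] by auto
    then show False using v(2) inactive x_active x_sub by (auto simp: mem_P)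
  qed
  then show ?thesis
    using inactive subtree_succ[of v] v(2) stk_eq by (auto simp: succ_simps contract_def)
qed

lemma search_state_succ: "search_state V E M fs s'"
proof unfold_locales
  fix v
  show "lab s' v = Some Even \<Longrightarrow> is_base s' (bse s' v)"
    using base_even[of v] B_base B_in_P in_blossom_base[OF B_base] in_blossom_base[of "bse s v"]
    by (auto simp: is_base_def succ_simps in_blossom_def split: if_splits)
  show "lab s' v = Some Odd \<Longrightarrow> lab s' (par s' v) = Some Even"
    using par_even[of v] even_succ by (auto simp: succ_simps split: if_splits)
  show "lab s' v \<noteq> None \<Longrightarrow> matched M v \<Longrightarrow> lab s' (mate M v) \<noteq> None"
    using mate_labelled[of v] labelled_succ by blast
  show "v \<in> stack_vertices (stk s') \<Longrightarrow> lab s' v = Some Even"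
    using us_in_P stack_even[of v] stk_eq by (auto simp: succ_simps in_blossom_def)
  show "v \<in> pending_calls (stk s') \<Longrightarrow> bse s' v \<noteq> v"
    using us_in_P pending_not_base[of v] B_base stk_eq
    by (auto simp: succ_simps in_blossom_def is_base_def)
  show "v \<in> scanned s' \<Longrightarrow> lab s' v = Some Even"
    using scanned_even[of v] even_succ by (simp add: succ_simps)
  show "distinct (rest s')" "set (rest s') \<subseteq> set fs"
    "v \<in> set (rest s') \<Longrightarrow> lab s' v \<noteq> None \<Longrightarrow> \<exists>p\<in>cp s'. v = fst p \<or> v = snd p"
    using distinct_rest rest_free labelled_rest_on_cp[of v] labelled_succ
    by (simp_all add: succ_simps)
qed (use odd_mate_base_succ base_mate_odd_succ tree_rel_ranked_succ older_frames_avoid_succ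
      scanned_subtree_inactive_succ in blast)+

lemma trancl_succ_fixed:
  assumes "contract c = c" "contract v = v" "(c, v) \<in> T'\<^sup>+"
  shows "(c, v) \<in> T\<^sup>+"
proof -
  have "c \<noteq> v" using assms(3) search_state.tree_rel_acyclic[OF search_state_succ] by blast
  moreover have "(c, v) \<in> T'\<^sup>*" using assms(3) by (rule trancl_into_rtrancl)
  then have "(c, v) \<in> T\<^sup>*" using rtrancl_succ_iff[OF assms(2), of c] assms(1) by simp
  ultimately show ?thesis by (simp add: rtrancl_eq_or_trancl)
qed

lemma trancl_below_contract:
  assumes a_c: "(a, c) \<in> T\<^sup>*" and a_n: "(a, n) \<in> T\<^sup>*" and c: "contract c = c"
    and up: "(c, contract n) \<in> T\<^sup>+"
  shows "(c, n) \<in> T\<^sup>+"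
proof (cases "n \<in> P")
  case True
  then have c_B: "(c, B) \<in> T\<^sup>+" using up by (simp add: contract_def)
  then have "c \<notin> P" using c tree_rel_acyclic[of B] by (auto simp: contract_fixed)
  from rtrancl_tree_rel_comparable[OF a_c a_n] show ?thesis
  proof
    assume "(c, n) \<in> T\<^sup>*"
    then show ?thesis using True \<open>c \<notin> P\<close> by (auto simp: rtrancl_eq_or_trancl)
  next
    assume "(n, c) \<in> T\<^sup>*"
    then have "c \<in> P" using True c_B by (auto simp: mem_P)
    then show ?thesis using \<open>c \<notin> P\<close> by simp
  qed
qed (use up in \<open>simp add: contract_def\<close>)

lemma active_node_succ:
  assumes active: "w \<in> stack_vertices (stk s')" and w: "lab s w \<noteq> None"
  shows "\<exists>z \<in> stack_vertices (stk s). node_of s z = contract (node_of s w)"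
proof (cases "node_of s w \<in> P")
  case True
  then show ?thesis using node_of_x stk_eq by (auto simp: contract_def)
next
  case False
  then have "w \<notin> set us" using us_in_P by (auto simp: node_of_def)
  then have "w \<in> stack_vertices (stk s)" using active stk_eq by (auto simp: succ_simps)
  then show ?thesis using False by (auto simp: contract_def)
qed

text \<open>If the contracted path met the tree path from a to t without swallowing a, the base B
  would lie on that path; but B is the node of the active vertex x.\<close>
lemma inactive_path_succ:
  assumes a: "lab s a = Some Odd" "lab s' a = Some Odd" and t: "lab s t \<noteq> None"
    and path: "inactive_path M s a t"
  shows "inactive_path M s' a t"
proof (rule inactive_pathI)
  have "\<not> in_blossom a" using a(2) by (cases "in_blossom a") (simp_all add: succ_simps)
  then have "a \<notin> P" using a(1) by (simp add: in_blossom_def)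
  then have contract_a: "contract a = a" by (simp add: contract_def)
  define n where "n = node_of s t"
  have node_t: "node_of s' t = contract n" using node_of_succ[OF t] by (simp add: n_def)
  have a_n: "(a, n) \<in> T\<^sup>+" using inactive_pathD(1)[OF path] by (simp add: n_def)
  have "a \<noteq> contract n"
  proof (cases "n \<in> P")
    case True
    then show ?thesis using \<open>a \<notin> P\<close> B_in_P by (metis contract_def)
  next
    case False
    then show ?thesis using a_n tree_rel_acyclic[of a] by (metis contract_def)
  qed
  moreover have "(a, contract n) \<in> T'\<^sup>*"
    using rtrancl_contract[OF trancl_into_rtrancl[OF a_n]] contract_a by simp
  ultimately show "(a, node_of s' t) \<in> T'\<^sup>+" by (simp add: node_t rtrancl_eq_or_trancl)
  fix w
  assume active: "w \<in> stack_vertices (stk s')" and a_w: "(a, node_of s' w) \<in> T'\<^sup>*"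
    and up: "(node_of s' w, node_of s' t) \<in> T'\<^sup>+"
  have "lab s' w \<noteq> None" using search_state.stack_even[OF search_state_succ active] by simp
  then have w: "lab s w \<noteq> None" using labelled_succ by blast
  define c where "c = contract (node_of s w)"
  have c: "node_of s' w = c" "contract c = c"
    using node_of_succ[OF w] contract_idem by (simp_all add: c_def)
  have a_c: "(a, c) \<in> T\<^sup>*" using a_w rtrancl_succ_iff[OF c(2), of a] contract_a c(1) by simp
  have "(c, contract n) \<in> T\<^sup>+"
    using trancl_succ_fixed[OF c(2) contract_idem] up c(1) node_t by simp
  then have "(c, n) \<in> T\<^sup>+" by (rule trancl_below_contract[OF a_c trancl_into_rtrancl[OF a_n] c(2)])
  moreover obtain z where "z \<in> stack_vertices (stk s)" "node_of s z = c"
    using active_node_succ[OF active w] c_def by blast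
  ultimately show False using inactive_pathD(2)[OF path] a_c unfolding n_def by blast
qed

lemma blossom_joins:
  assumes a: "lab s a = Some Odd" "lab s' a = Some Even" and t: "lab s t \<noteq> None"
    and path: "inactive_path M s a t"
  shows "lab s' t = Some Even \<and> bse s' t = bse s' a"
proof -
  have "in_blossom a" using a by (auto simp: succ_simps split: if_splits)
  then have "a \<in> P" using a(1) by (simp add: in_blossom_def)
  then have a_B: "(a, B) \<in> T\<^sup>*" and y_a: "(bse s y, a) \<in> T\<^sup>*" by (simp_all add: mem_P)
  have a_t: "(a, node_of s t) \<in> T\<^sup>*" using inactive_pathD(1)[OF path] by simp
  from rtrancl_tree_rel_comparable[OF a_B a_t] have "node_of s t \<in> P"
  proof
    assume "(B, node_of s t) \<in> T\<^sup>*"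
    moreover have "(B, node_of s t) \<notin> T\<^sup>+"
      using inactive_pathD(2)[OF path, of x] stk_eq node_of_x a_B by simp
    ultimately show ?thesis using B_in_P by (auto simp: rtrancl_eq_or_trancl)
  next
    assume "(node_of s t, B) \<in> T\<^sup>*"
    then show ?thesis using y_a a_t by (simp add: mem_P)
  qed
  then have "in_blossom t" using t by (simp add: in_blossom_iff)
  then show ?thesis using \<open>in_blossom a\<close> by (simp add: succ_simps)
qed

end

section \<open>Executions\<close>

context search_state
begin

lemma next_tree_stepE:
  assumes "next_tree_step E M s s'"
  obtains (skip_root) f fs' where "stk s = []" "rest s = f # fs'" "s' = s\<lparr>rest := fs'\<rparr>"
    | (new_tree) f fs' where "new_tree_step V E M fs s f fs' s'"
proof -
  obtain f fs' where root: "stk s = []" "rest s = f # fs'" and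
    ite: "if \<exists>p\<in>cp s. f = fst p \<or> f = snd p then s' = s\<lparr>rest := fs'\<rparr>
       else s' = s\<lparr>lab := (lab s)(f := Some Even), bse := (bse s)(f := f),
                   stk := [Scan f (nm_nbrs E M f)], rest := fs', cur_root := f\<rparr>"
    using assms unfolding next_tree_step_def by blast
  show ?thesis
  proof (cases "\<exists>p\<in>cp s. f = fst p \<or> f = snd p")
    case True
    then show ?thesis using skip_root root ite by simp
  next
    case False
    then have "new_tree_step V E M fs s f fs' s'" using root ite by unfold_locales simp_all
    then show ?thesis by (rule new_tree)
  qed
qed

lemma scan_stepE:
  assumes "scan_step E M s s'"
  obtains (skip_edge) x R rs y where "stk s = Scan x R # rs" "s' = s\<lparr>stk := Scan x (R - {y}) # rs\<rparr>"
    | (augment) x R rs y where "augment_step V E M fs s x R rs y s'"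
    | (grow) x R rs y where "grow_step V E M fs s x R rs y s'"
proof -
  obtain x R rs y where stk: "stk s = Scan x R # rs" and
    ite: "if lab s y = None \<and> \<not> matched M y then
         s' = s\<lparr>lab := (lab s)(y := Some Odd), par := (par s)(y := x),
                cp := insert (cur_root s, y) (cp s), stk := []\<rparr>
       else if lab s y = None \<and> matched M y then
         s' = s\<lparr>lab := (lab s)(y := Some Odd, mate M y := Some Even),
                par := (par s)(y := x), bse := (bse s)(mate M y := mate M y),
                stk := Scan (mate M y) (nm_nbrs E M (mate M y)) # Scan x (R - {y}) # rs\<rparr>
       else if lab s y = Some Even \<and> proper_desc M s (bse s y) (bse s x) then False
       else s' = s\<lparr>stk := Scan x (R - {y}) # rs\<rparr>"
    using assms unfolding scan_step_def by blast
  consider "lab s y = None" "\<not> matched M y" | "lab s y = None" "matched M y"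
    | "lab s y \<noteq> None" by blast
  then show ?thesis
  proof cases
    case 1
    then have "augment_step V E M fs s x R rs y s'" using stk ite by unfold_locales simp_all
    then show ?thesis by (rule augment)
  next
    case 2
    then have "grow_step V E M fs s x R rs y s'" using stk ite by unfold_locales simp_all
    then show ?thesis by (rule grow)
  next
    case 3
    then show ?thesis using skip_edge stk ite by (simp split: if_splits)
  qed
qed

lemma blossom_stepE:
  assumes "blossom_step E M s s'"
  obtains x R rs y us P where "blossom_contraction V E M fs s x R rs y us P s'"
proof -
  obtain x R rs y us where stk: "stk s = Scan x R # rs" and y: "lab s y = Some Even"
    and below: "(bse s y, bse s x) \<in> T\<^sup>+"
    and rest: "let P = {n. (bse s y, n) \<in> T\<^sup>* \<and> (n, bse s x) \<in> T\<^sup>*};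
           inB = (\<lambda>v. (v \<in> P \<and> lab s v = Some Odd) \<or> (lab s v = Some Even \<and> bse s v \<in> P))
       in distinct us \<and> set us = {v \<in> P. lab s v = Some Odd} \<and>
          sorted_wrt (\<lambda>a b. proper_desc M s b a) us \<and>
          s' = s\<lparr>lab := (\<lambda>v. if inB v then Some Even else lab s v),
                 bse := (\<lambda>v. if inB v then bse s x else bse s v),
                 stk := Calls us # Scan x (R - {y}) # rs\<rparr>"
    using assms unfolding blossom_step_def proper_desc_def by blast
  have "blossom_contraction V E M fs s x R rs y us
          {n. (bse s y, n) \<in> T\<^sup>* \<and> (n, bse s x) \<in> T\<^sup>*} s'"
    using stk y below rest by unfold_locales (simp_all add: Let_def)
  then show ?thesis by (rule that)
qed

lemma step_cases:
  assumes "step E M s s'"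
  obtains (skip_root) f fs' where "stk s = []" "rest s = f # fs'" "s' = s\<lparr>rest := fs'\<rparr>"
    | (new_tree) f fs' where "new_tree_step V E M fs s f fs' s'"
    | (finish) x rs where "stk s = Scan x {} # rs"
        "s' = s\<lparr>stk := rs, scanned := insert x (scanned s)\<rparr>"
    | (pop_calls) rs where "stk s = Calls [] # rs" "s' = s\<lparr>stk := rs\<rparr>"
    | (call) u us rs where "stk s = Calls (u # us) # rs"
        "s' = s\<lparr>stk := Scan u (nm_nbrs E M u) # Calls us # rs\<rparr>"
    | (skip_edge) x R rs y where "stk s = Scan x R # rs" "s' = s\<lparr>stk := Scan x (R - {y}) # rs\<rparr>"
    | (augment) x R rs y where "augment_step V E M fs s x R rs y s'"
    | (grow) x R rs y where "grow_step V E M fs s x R rs y s'"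
    | (blossom) x R rs y us P where "blossom_contraction V E M fs s x R rs y us P s'"
proof -
  consider "next_tree_step E M s s'" | "finish_step s s'" | "calls_step E M s s'"
    | "scan_step E M s s'" | "blossom_step E M s s'"
    using assms unfolding step_def by blast
  then show ?thesis
  proof cases
    case 1
    then show ?thesis
    proof (cases rule: next_tree_stepE)
      case (skip_root f fs')
      then show ?thesis by (rule that(1))
    next
      case (new_tree f fs')
      then show ?thesis by (rule that(2))
    qed
  next
    case 2
    then show ?thesis using finish unfolding finish_step_def by blast
  next
    case 3
    then show ?thesis using pop_calls call unfolding calls_step_def by blast
  next
    case 4
    then show ?thesis
    proof (cases rule: scan_stepE)
      case (skip_edge x R rs y)
      then show ?thesis by (rule that(6))
    next
      case (augment x R rs y)
      then show ?thesis by (rule that(7))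
    next
      case (grow x R rs y)
      then show ?thesis by (rule that(8))
    qed
  next
    case 5
    then show ?thesis using blossom_stepE blossom by metis
  qed
qed

lemma search_state_same_tree:
  assumes same: "lab s' = lab s" "par s' = par s" "bse s' = bse s" "cp s' = cp s"
    and stack: "stack_vertices (stk s') \<subseteq> stack_vertices (stk s)"
      "pending_calls (stk s') \<subseteq> pending_calls (stk s)"
    and scanned: "\<And>v. v \<in> scanned s' \<Longrightarrow> lab s v = Some Even"
    and rest: "distinct (rest s')" "set (rest s') \<subseteq> set (rest s)"
    and avoid: "older_frames_avoid (is_base s) (subtree M s) (stk s')"
    and inactive:
      "\<And>v. v \<in> scanned s' \<Longrightarrow> is_base s v \<Longrightarrow> stack_vertices (stk s') \<inter> subtree M s v = {}"
  shows "search_state V E M fs s'"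
proof -
  have tree: "tree_rel M s' = T" unfolding tree_rel_def node_parent_def same ..
  have base: "is_base s' = is_base s" by (simp add: fun_eq_iff is_base_def same)
  have sub: "subtree M s' = subtree M s"
    by (simp add: fun_eq_iff subtree_def node_of_def same tree)
  show ?thesis
  proof unfold_locales
    fix v
    show "lab s' v = Some Even \<Longrightarrow> is_base s' (bse s' v)"
      "lab s' v = Some Odd \<Longrightarrow> lab s' (par s' v) = Some Even"
      "lab s' v = Some Odd \<Longrightarrow> matched M v \<Longrightarrow> is_base s' (mate M v)"
      "is_base s' v \<Longrightarrow> matched M v \<Longrightarrow> lab s' (mate M v) = Some Odd"
      "lab s' v \<noteq> None \<Longrightarrow> matched M v \<Longrightarrow> lab s' (mate M v) \<noteq> None"
      using base_even par_even odd_mate_base base_mate_odd mate_labelled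
      by (simp_all add: same base)
    show "v \<in> stack_vertices (stk s') \<Longrightarrow> lab s' v = Some Even"
      "v \<in> pending_calls (stk s') \<Longrightarrow> bse s' v \<noteq> v"
      "v \<in> scanned s' \<Longrightarrow> lab s' v = Some Even"
      using stack stack_even pending_not_base scanned by (auto simp: same)
    show "v \<in> set (rest s') \<Longrightarrow> lab s' v \<noteq> None \<Longrightarrow> \<exists>p\<in>cp s'. v = fst p \<or> v = snd p"
      using rest(2) labelled_rest_on_cp[of v] by (auto simp: same)
  qed (use tree_rel_ranked rest rest_free avoid inactive in \<open>auto simp: tree base sub\<close>)
qed

lemma search_state_step:
  assumes "step E M s s'"
  shows "search_state V E M fs s'"
  using assms
proof (cases rule: step_cases)
  case (skip_root f fs')
  then show ?thesis
    using distinct_rest older_frames_avoid_subtrees scanned_even scanned_subtree_inactive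
    by (intro search_state_same_tree) auto
next
  case (finish x rs)
  then have "older_frames_avoid (is_base s) (subtree M s) (Scan x {} # rs)"
    using older_frames_avoid_subtrees by simp
  then show ?thesis
    using finish distinct_rest scanned_even stack_even[of x] scanned_subtree_inactive
    by (intro search_state_same_tree) auto
next
  case (pop_calls rs)
  then show ?thesis
    using distinct_rest older_frames_avoid_subtrees scanned_even scanned_subtree_inactive
    by (intro search_state_same_tree) auto
next
  case (call u us rs)
  then have "\<not> is_base s u" using pending_not_base[of u] by (simp add: is_base_def)
  then show ?thesis
    using call distinct_rest older_frames_avoid_subtrees scanned_even scanned_subtree_inactive
    by (intro search_state_same_tree) auto
next
  case (skip_edge x R rs y)
  then show ?thesis
    using distinct_rest older_frames_avoid_subtrees scanned_even scanned_subtree_inactive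
    by (intro search_state_same_tree) auto
qed (fact new_tree_step.search_state_succ augment_step.search_state_succ
       grow_step.search_state_succ blossom_contraction.search_state_succ)+

lemma step_conservative_or_blossom:
  assumes "step E M s s'"
  obtains "conservative_extension M s s'"
    | x R rs y us P where "blossom_contraction V E M fs s x R rs y us P s'"
  using assms
proof (cases rule: step_cases)
  case (new_tree f fs')
  then show ?thesis by (rule that(1)[OF new_tree_step.conservative])
next
  case (augment x R rs y)
  then show ?thesis by (rule that(1)[OF augment_step.conservative])
next
  case (grow x R rs y)
  then show ?thesis by (rule that(1)[OF grow_step.conservative])
next
  case (blossom x R rs y us P)
  then show ?thesis by (rule that(2))
qed (rule that(1), rule conservative_extension_same_tree; auto)+

lemma lab_step:
  assumes "step E M s s'" and "lab s v \<noteq> None"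
  shows "lab s' v = lab s v \<or> lab s' v = Some Even"
  using assms(1)
proof (cases rule: step_conservative_or_blossom)
  case 1
  then show ?thesis using conservative_extensionD(1)[OF 1 assms(2)] by simp
next
  case (2 x R rs y us P)
  then show ?thesis using blossom_contraction.succ_simps(1) by metis
qed

end

context find_ap_set
begin

lemma search_state_init: "search_state V E M fs (init_st fs)"
proof -
  have "tree_rel M (init_st fs) = {}" by (simp add: tree_rel_def node_parent_def init_st_def)
  then show ?thesis using distinct_free by unfold_locales (simp_all add: init_st_def is_base_def)
qed

end

locale find_ap_run = find_ap_set V E M fs for V :: "'v set" and E M fs +
  fixes run :: "nat \<Rightarrow> 'v st" and n :: nat
  assumes execution: "execution E M fs run n"
begin

lemma step_run: "k < n \<Longrightarrow> step E M (run k) (run (Suc k))"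
  using execution by (simp add: execution_def)

lemma search_state_run: "k \<le> n \<Longrightarrow> search_state V E M fs (run k)"
proof (induction k)
  case 0
  then show ?case using execution search_state_init by (simp add: execution_def)
next
  case (Suc k)
  then have "k < n" by simp
  then show ?case using search_state.search_state_step[OF Suc.IH step_run] by simp
qed

lemma lab_run_mono:
  assumes "i \<le> k" "k \<le> n" "lab (run i) v \<noteq> None"
  shows "lab (run k) v = lab (run i) v \<or> lab (run k) v = Some Even"
  using assms(1,2)
proof (induction k rule: dec_induct)
  case (step m)
  then have "lab (run m) v \<noteq> None" using assms(3) by auto
  then show ?case
    using step search_state.lab_step[OF search_state_run step_run, of m v] by auto
qed simp

lemma lab_run_odd_between:
  assumes "i \<le> k" "k \<le> j" "j \<le> n" and odd: "lab (run i) v = Some Odd" "lab (run j) v = Some Odd"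
  shows "lab (run k) v = Some Odd"
proof (rule ccontr)
  assume "lab (run k) v \<noteq> Some Odd"
  then have "lab (run k) v = Some Even" using lab_run_mono[of i k v] assms by auto
  then have "lab (run j) v = Some Even" using lab_run_mono[of k j v] assms by auto
  then show False using odd(2) by simp
qed

lemma inactive_path_run:
  assumes "i \<le> k" "k \<le> j" "j \<le> n"
    and a: "lab (run i) a = Some Odd" "lab (run j) a = Some Odd" and t: "lab (run i) t \<noteq> None"
    and path: "inactive_path M (run i) a t"
  shows "inactive_path M (run k) a t"
  using assms(1,2)
proof (induction k rule: dec_induct)
  case (step m)
  interpret search_state V E M fs "run m" using search_state_run step assms(3) by simp
  have a_odd: "lab (run m) a = Some Odd" "lab (run (Suc m)) a = Some Odd"
    using lab_run_odd_between[OF _ _ assms(3) a] step by auto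
  have t_m: "lab (run m) t \<noteq> None" using lab_run_mono[of i m t] t step assms(3) by auto
  have IH: "inactive_path M (run m) a t" using step by simp
  have "step E M (run m) (run (Suc m))" using step_run step assms(3) by simp
  then show ?case
  proof (cases rule: step_conservative_or_blossom)
    case 1
    have "search_state V E M fs (run (Suc m))" using search_state_run step assms(3) by simp
    then show ?thesis using inactive_path_conservative[OF 1 _ t_m IH] by simp
  next
    case (2 x R rs y us P)
    then show ?thesis by (rule blossom_contraction.inactive_path_succ[OF _ a_odd t_m IH])
  qed
qed (use path in simp)

end

theorem lemmaA3:
  fixes V :: "'v set" and E M :: "'v set set" and fs :: "'v list"
    and run :: "nat \<Rightarrow> 'v st" and n i j :: nat and s t t' :: 'v
  assumes "graph V E" and "M \<subseteq> E" and "matching M"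
    and "distinct fs" and "set fs = {v \<in> V. \<not> matched M v}"
    and "execution E M fs run n"
    and "i \<le> j" and "j < n"
    and "lab (run i) t = Some Odd" and "{t, t'} \<in> M" and "lab (run i) t' = Some Even"
    and "t' \<in> scanned (run i)"
    and "lab (run i) s = Some Odd" and "proper_desc M (run i) s t"
    and "blossom_step E M (run j) (run (Suc j))"
    and "lab (run j) s = Some Odd" and "lab (run (Suc j)) s = Some Even"
  shows "lab (run (Suc j)) t = Some Even \<and> bse (run (Suc j)) t = bse (run (Suc j)) s"
proof -
  interpret find_ap_run V E M fs run n using assms(1-6) by unfold_locales
  interpret before_blossom: search_state V E M fs "run j" using search_state_run assms(8) by simp
  have "inactive_path M (run i) s t"
    using search_state.inactive_path_below_scanned_mate[OF search_state_run] assms(7-10,12,14)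
    by (simp add: proper_desc_def)
  then have "inactive_path M (run j) s t"
    using inactive_path_run[of i j j] assms(7-9,13,16) by simp
  moreover have "lab (run j) t \<noteq> None" using lab_run_mono[of i j t] assms(7-9) by auto
  moreover obtain x R rs y us P
    where "blossom_contraction V E M fs (run j) x R rs y us P (run (Suc j))"
    using before_blossom.blossom_stepE assms(15) by blast
  ultimately show ?thesis using blossom_contraction.blossom_joins assms(16,17) by metis
qed

end
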